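(* Let $a_0=0$ and let $a_1<a_2<\cdots$ be the increasing enumeration of $\{m\ge1:\ c_m=1\}$. Then for every $n\ge0$, $$t_{a_n}=\tfrac12(t_n+t_{n+1})+\tfrac12(-1)^n(t_n-t_{n+1}).$$ In particular $t_{a_{2n}}=t_n$ and $t_{a_{2n+1}}=t_{n+1}$ for all $n\ge0$.
   Context: For $n\in\mathbb{N}$ let $s_2(n)$ be the sum of the binary digits of $n$ and $t_n=s_2(n)\bmod 2\in\{0,1\}$ (the Prouhet–Thue–Morse sequence). Let $F(X)=\sum_{n\ge1}t_nX^n\in\mathbb{F}_2[[X]]$ and let $G(X)=\sum_{n\ge1}c_nX^n\in\mathbb{F}_2[[X]]$ be its compositional inverse, i.e. $F(G(X))=G(F(X))=X$. The $c_n$ are identified with integers in $\{0,1\}$. *)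

theory Defs
  imports Complex_Main "HOL-Library.Z2" "HOL-Computational_Algebra.Formal_Power_Series"
    "HOL-Library.Infinite_Set"
begin

fun s2 :: "nat \<Rightarrow> nat" where
  "s2 n = (if n = 0 then 0 else n mod 2 + s2 (n div 2))"
declare s2.simps[simp del]

definition tm :: "nat \<Rightarrow> nat" where
  "tm n = s2 n mod 2"

definition tmF :: "bit fps" where
  "tmF = Abs_fps (\<lambda>n. if n = 0 then 0 else of_nat (tm n))"

text \<open>a_0 = 0, and a_1 < a_2 < ... enumerate {m >= 1. c_m = 1}, where c_m = fps_nth G m.\<close>
definition aseq :: "bit fps \<Rightarrow> nat \<Rightarrow> nat" where
  "aseq G n = (if n = 0 then 0 else enumerate {m. m \<ge> 1 \<and> fps_nth G m = 1} (n - 1))"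

end

theory Submission
  imports Defs
begin

text \<open>
  Over \<open>\<bbbF>\<^sub>2\<close> the recursions \<open>t\<^sub>2\<^sub>n = t\<^sub>n\<close>, \<open>t\<^sub>2\<^sub>n\<^sub>+\<^sub>1 = 1 + t\<^sub>n\<close> and the Frobenius identity
  \<open>F(X)\<^sup>2 = F(X\<^sup>2)\<close> give \<open>(1 + X\<^sup>2) F = (1 + X)\<^sup>3 F\<^sup>2 + X\<close>. Substituting \<open>X := G\<close> shows that
  \<open>\<sigma> = X (1 + G)\<close> satisfies \<open>\<sigma> + \<sigma>\<^sup>2 + \<sigma>\<^sup>3 = X\<close>, which has only one solution with zero
  constant term. Writing \<open>M = \<Sum> X\<^sup>m\<close> over the Moser--de Bruijn numbers \<open>m\<close> (sums of distinct
  powers of 4), one has \<open>M = (1 + X) M\<^sup>4\<close>, hence \<open>(1 + X) M\<^sup>3 = 1\<close>, and this makes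
  \<open>1 + (1 + X) M\<^sup>2\<close> a solution. Thus \<open>c\<^sub>m = 1\<close> iff \<open>m \<ge> 1\<close> and \<open>\<lceil>m/2\<rceil>\<close> is a Moser--de Bruijn
  number, i.e. \<open>a\<^sub>2\<^sub>n = 2 m\<^sub>n\<close> and \<open>a\<^sub>2\<^sub>n\<^sub>-\<^sub>1 = 2 m\<^sub>n - 1\<close> for the \<open>n\<close>-th such number \<open>m\<^sub>n\<close>; the theorem
  then reduces to \<open>t(m\<^sub>n) = t(2 m\<^sub>n - 1) = t\<^sub>n\<close>.
\<close>

unbundle fps_syntax

section \<open>Power series in characteristic 2\<close>

definition fps_dilate :: "nat \<Rightarrow> 'a::zero fps \<Rightarrow> 'a fps" where
  "fps_dilate k f = Abs_fps (\<lambda>n. if k dvd n then f $ (n div k) else 0)"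

lemma fps_dilate_nth: "fps_dilate k f $ n = (if k dvd n then f $ (n div k) else 0)"
  by (simp add: fps_dilate_def)

lemma fps_dilate_dilate: "fps_dilate k (fps_dilate l f) = fps_dilate (k * l) f"
  by (rule fps_ext) (auto simp: fps_dilate_nth div_mult2_eq elim!: dvdE)

lemma bit_sum_palindromic:
  fixes g :: "nat \<Rightarrow> bit"
  assumes palindromic: "\<And>i. i \<le> n \<Longrightarrow> g (n - i) = g i"
  shows "(\<Sum>i=0..n. g i) = (if even n then g (n div 2) else 0)"
proof -
  define L where "L = {i. 2 * i < n}"
  define M where "M = {i. 2 * i = n}"
  define R where "R = {i. i \<le> n \<and> n < 2 * i}"
  have "finite L" "finite M" "finite R" "L \<inter> M = {}" "(L \<union> M) \<inter> R = {}"
    by (auto simp: L_def R_def M_def intro: finite_subset[of _ "{..n}"])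
  moreover have "{0..n} = L \<union> M \<union> R"
    by (auto simp: L_def R_def M_def)
  ultimately have "sum g {0..n} = sum g L + sum g M + sum g R"
    by (simp add: sum.union_disjoint)
  also have "sum g R = sum g L"
    by (rule sum.reindex_bij_witness[of _ "\<lambda>i. n - i" "\<lambda>i. n - i"])
      (use palindromic in \<open>auto simp: L_def R_def\<close>)
  also have "sum g L + sum g M + sum g L = sum g M"
    by (cases "sum g L"; cases "sum g M") simp_all
  also have "M = (if even n then {n div 2} else {})"
    by (auto simp: M_def)
  finally show ?thesis
    by simp
qed

lemma bit_fps_square: "(f :: bit fps)\<^sup>2 = fps_dilate 2 f"
proof (rule fps_ext)
  fix n
  have "(f\<^sup>2) $ n = (\<Sum>i=0..n. f $ i * f $ (n - i))"
    by (simp add: power2_eq_square fps_mult_nth)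
  also have "\<dots> = (if even n then f $ (n div 2) * f $ (n - n div 2) else 0)"
    by (rule bit_sum_palindromic) (simp add: mult.commute)
  also have "\<dots> = fps_dilate 2 f $ n"
    by (cases "f $ (n div 2)") (auto simp: fps_dilate_nth elim!: evenE)
  finally show "(f\<^sup>2) $ n = fps_dilate 2 f $ n" .
qed

lemma bit_fps_two_eq_zero: "(2 :: bit fps) = 0"
  by (rule fps_ext) (simp add: numeral_fps_const)

text \<open>The method \<open>algebra\<close> reasons over \<open>\<int>\<close>; identities in characteristic 2 are therefore proved
  by exhibiting the difference of the two sides as twice a polynomial.\<close>

lemma bit_fps_eq_if_diff_eq_double: "(a :: bit fps) - b = 2 * c \<Longrightarrow> a = b"
  by (simp add: bit_fps_two_eq_zero)

lemma fps_cubic_injective: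
  fixes s t :: "'a::idom fps"
  assumes "s $ 0 = 0" "t $ 0 = 0" and "s + s\<^sup>2 + s ^ 3 = t + t\<^sup>2 + t ^ 3"
  shows "s = t"
proof -
  have "(s - t) * (1 + s + t + s\<^sup>2 + s * t + t\<^sup>2) = 0"
    using assms(3) by algebra
  moreover have "(1 + s + t + s\<^sup>2 + s * t + t\<^sup>2) $ 0 \<noteq> 0"
    using assms(1,2) by (simp add: power2_eq_square)
  ultimately show ?thesis
    by (metis eq_iff_diff_eq_0 fps_zero_nth mult_eq_0_iff)
qed

section \<open>The Thue--Morse series\<close>

lemma s2_double: "s2 (2 * k) = s2 k"
  by (cases "k = 0") (simp_all add: s2.simps[of "2 * k"] s2.simps[of 0])

lemma s2_Suc_double: "s2 (Suc (2 * k)) = Suc (s2 k)"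
  by (subst s2.simps) simp

lemma tm_0 [simp]: "tm 0 = 0"
  by (simp add: tm_def s2.simps[of 0])

lemma tm_le_one: "tm n \<le> 1"
  by (simp add: tm_def)

lemma tm_double: "tm (2 * k) = tm k"
  by (simp add: tm_def s2_double)

lemma tm_Suc_double: "tm (Suc (2 * k)) = 1 - tm k"
  unfolding tm_def s2_Suc_double by presburger

lemma tm_quadruple: "tm (4 * k) = tm k"
  using tm_double[of "2 * k"] by (simp add: tm_double)

lemma tmF_nth: "tmF $ n = of_nat (tm n)"
  by (simp add: tmF_def)

lemma one_plus_X_mult_nth:
  "((1 + fps_X) * (f :: 'a::semiring_1 fps)) $ n = f $ n + (if n = 0 then 0 else f $ (n - 1))"
  by (simp add: distrib_right)

definition odd_indicator_fps :: "bit fps" where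
  "odd_indicator_fps = Abs_fps (\<lambda>n. of_bool (odd n))"

lemma odd_indicator_fps_eq: "(1 + fps_X\<^sup>2) * odd_indicator_fps = fps_X"
proof (rule fps_ext)
  fix n :: nat
  have "((1 + fps_X\<^sup>2) * odd_indicator_fps) $ n =
      odd_indicator_fps $ n + (if n < 2 then 0 else odd_indicator_fps $ (n - 2))"
    by (simp only: distrib_right mult_1 fps_add_nth fps_X_power_mult_nth)
  then show "((1 + fps_X\<^sup>2) * odd_indicator_fps) $ n = fps_X $ n"
    by (cases "n < 2") (auto simp: odd_indicator_fps_def less_2_cases_iff)
qed

lemma tmF_eq: "tmF = (1 + fps_X) * tmF\<^sup>2 + odd_indicator_fps"
proof (rule fps_ext)
  fix n
  obtain k :: nat where "n = 2 * k \<or> n = 2 * k + 1"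
    by (metis evenE oddE)
  then show "tmF $ n = ((1 + fps_X) * tmF\<^sup>2 + odd_indicator_fps) $ n"
    using tm_le_one[of k]
    by (auto simp: one_plus_X_mult_nth bit_fps_square fps_dilate_nth tmF_nth tm_double
        tm_Suc_double odd_indicator_fps_def le_Suc_eq)
qed

lemma tmF_functional_eq:
  "(1 + fps_X\<^sup>2) * tmF = (1 + fps_X) * (1 + fps_X\<^sup>2) * tmF\<^sup>2 + fps_X"
  using tmF_eq odd_indicator_fps_eq by algebra

lemma tmF_right_inverse_cubic:
  assumes "G $ 0 = 0" and "tmF oo G = fps_X"
  shows "fps_X * (1 + G) + (fps_X * (1 + G))\<^sup>2 + (fps_X * (1 + G)) ^ 3 = fps_X"
proof (rule bit_fps_eq_if_diff_eq_double)
  have "((1 + fps_X\<^sup>2) * tmF) oo G = ((1 + fps_X) * (1 + fps_X\<^sup>2) * tmF\<^sup>2 + fps_X) oo G"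
    by (simp only: tmF_functional_eq)
  then have "(1 + G\<^sup>2) * fps_X = (1 + G) * (1 + G\<^sup>2) * fps_X\<^sup>2 + G"
    using assms by (simp add: fps_compose_mult_distrib fps_compose_add_distrib
        fps_X_power_compose flip: fps_compose_power)
  then show "fps_X * (1 + G) + (fps_X * (1 + G))\<^sup>2 + (fps_X * (1 + G)) ^ 3 - fps_X =
      2 * (fps_X\<^sup>2 * (1 + G + G\<^sup>2) + fps_X ^ 3 * G * (1 + G))"
    by algebra
qed

section \<open>The Moser--de Bruijn sequence\<close>

fun moser_de_bruijn :: "nat \<Rightarrow> nat" where
  "moser_de_bruijn k = (if k = 0 then 0 else k mod 2 + 4 * moser_de_bruijn (k div 2))"

declare moser_de_bruijn.simps [simp del]

lemma moser_de_bruijn_0 [simp]: "moser_de_bruijn 0 = 0"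
  by (simp add: moser_de_bruijn.simps[of 0])

lemma moser_de_bruijn_rec: "moser_de_bruijn k = k mod 2 + 4 * moser_de_bruijn (k div 2)"
  by (cases "k = 0") (simp_all add: moser_de_bruijn.simps[of k])

lemma moser_de_bruijn_double: "moser_de_bruijn (2 * k) = 4 * moser_de_bruijn k"
  by (subst moser_de_bruijn_rec) simp

lemma moser_de_bruijn_Suc_double: "moser_de_bruijn (Suc (2 * k)) = Suc (4 * moser_de_bruijn k)"
  by (subst moser_de_bruijn_rec) simp

lemma strict_mono_moser_de_bruijn: "strict_mono moser_de_bruijn"
  unfolding strict_mono_Suc_iff
proof
  fix k
  show "moser_de_bruijn k < moser_de_bruijn (Suc k)"
  proof (induction k rule: less_induct)
    case (less k)
    obtain j where "k = 2 * j \<or> k = 2 * j + 1"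
      by (metis evenE oddE)
    then show ?case
    proof
      assume "k = 2 * j"
      then show ?case
        by (simp add: moser_de_bruijn_double moser_de_bruijn_Suc_double)
    next
      assume k: "k = 2 * j + 1"
      then have "moser_de_bruijn j < moser_de_bruijn (Suc j)"
        using less by simp
      then show ?case
        using k moser_de_bruijn_double[of "Suc j"] by (simp add: moser_de_bruijn_Suc_double)
    qed
  qed
qed

lemma moser_de_bruijn_pos_iff: "0 < moser_de_bruijn k \<longleftrightarrow> 0 < k"
  using strict_mono_less[OF strict_mono_moser_de_bruijn, of 0 k] by simp

lemma range_moser_de_bruijn_iff:
  "n \<in> range moser_de_bruijn \<longleftrightarrow> n mod 4 \<le> 1 \<and> n div 4 \<in> range moser_de_bruijn"
proof
  assume "n \<in> range moser_de_bruijn"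
  then obtain k where "n = k mod 2 + 4 * moser_de_bruijn (k div 2)"
    by (metis moser_de_bruijn_rec rangeE)
  then show "n mod 4 \<le> 1 \<and> n div 4 \<in> range moser_de_bruijn"
    by simp
next
  assume "n mod 4 \<le> 1 \<and> n div 4 \<in> range moser_de_bruijn"
  then obtain j where r: "n mod 4 \<le> 1" and q: "n div 4 = moser_de_bruijn j"
    by blast
  have "n = n mod 4 + 4 * (n div 4)"
    by simp
  also have "\<dots> = moser_de_bruijn (2 * j + n mod 4)"
    using r by (subst moser_de_bruijn_rec) (auto simp: q le_Suc_eq)
  finally have "n = moser_de_bruijn (2 * j + n mod 4)" .
  then show "n \<in> range moser_de_bruijn"
    by (metis rangeI)
qed

lemma tm_moser_de_bruijn: "tm (moser_de_bruijn k) = tm k"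
proof (induction k rule: less_induct)
  case (less k)
  obtain j where "k = 2 * j \<or> k = Suc (2 * j)"
    by (metis evenE oddE Suc_eq_plus1)
  then show ?case
  proof
    assume k: "k = 2 * j"
    then show ?case
      using less by (cases "j = 0") (simp_all add: moser_de_bruijn_double tm_quadruple tm_double)
  next
    assume k: "k = Suc (2 * j)"
    then have "tm (moser_de_bruijn j) = tm j"
      using less by simp
    then show ?thesis
      using k tm_Suc_double[of "2 * moser_de_bruijn j"]
      by (simp add: moser_de_bruijn_Suc_double tm_double tm_Suc_double mult.assoc)
  qed
qed

lemma tm_double_moser_de_bruijn_minus_one:
  "0 < k \<Longrightarrow> tm (2 * moser_de_bruijn k - 1) = tm k"
proof (induction k rule: less_induct)
  case (less k)
  obtain j where "k = 2 * j \<or> k = Suc (2 * j)"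
    by (metis evenE oddE Suc_eq_plus1)
  then show ?case
  proof
    assume k: "k = 2 * j"
    define x where "x = 2 * moser_de_bruijn j - 1"
    have "0 < j"
      using less.prems k by simp
    then have "tm x = tm j"
      using less k unfolding x_def by simp
    moreover have "2 * moser_de_bruijn k - 1 = Suc (2 * Suc (2 * x))"
      using moser_de_bruijn_pos_iff[of j] \<open>0 < j\<close> k
      by (simp add: x_def moser_de_bruijn_double)
    ultimately show ?case
      using k tm_Suc_double[of "Suc (2 * x)"] tm_Suc_double[of x] tm_le_one[of x]
      by (simp add: tm_double)
  next
    assume k: "k = Suc (2 * j)"
    then have "2 * moser_de_bruijn k - 1 = Suc (2 * (2 * (2 * moser_de_bruijn j)))"
      by (simp add: moser_de_bruijn_Suc_double)
    then show ?case
      using k tm_Suc_double[of "4 * moser_de_bruijn j"]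
      by (simp add: tm_quadruple tm_Suc_double tm_moser_de_bruijn)
  qed
qed

definition moser_de_bruijn_fps :: "bit fps" where
  "moser_de_bruijn_fps = Abs_fps (\<lambda>n. of_bool (n \<in> range moser_de_bruijn))"

lemma moser_de_bruijn_fps_eq:
  "moser_de_bruijn_fps = (1 + fps_X) * fps_dilate 4 moser_de_bruijn_fps"
proof (rule fps_ext)
  fix n
  have "4 dvd n \<longleftrightarrow> n mod 4 = (0::nat)" "n \<noteq> 0 \<Longrightarrow> 4 dvd (n - 1) \<longleftrightarrow> n mod 4 = 1"
    "n mod 4 = 1 \<Longrightarrow> (n - 1) div 4 = n div 4"
    by presburger+
  moreover have "moser_de_bruijn_fps $ n =
      of_bool (n mod 4 \<le> 1 \<and> n div 4 \<in> range moser_de_bruijn)"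
    unfolding moser_de_bruijn_fps_def fps_nth_Abs_fps by (subst range_moser_de_bruijn_iff) (rule refl)
  ultimately show "moser_de_bruijn_fps $ n = ((1 + fps_X) * fps_dilate 4 moser_de_bruijn_fps) $ n"
    by (auto simp: one_plus_X_mult_nth fps_dilate_nth moser_de_bruijn_fps_def)
qed

lemma moser_de_bruijn_fps_cube: "(1 + fps_X) * moser_de_bruijn_fps ^ 3 = 1"
proof -
  let ?M = moser_de_bruijn_fps
  have "fps_dilate 4 ?M = (?M\<^sup>2)\<^sup>2"
    using fps_dilate_dilate[of 2 2 ?M] by (simp add: bit_fps_square)
  then have "?M * ((1 + fps_X) * ?M ^ 3) = ?M * 1"
    using moser_de_bruijn_fps_eq by (simp add: algebra_simps power_numeral_reduce)
  moreover have "?M $ 0 = 1"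
    using rangeI[of moser_de_bruijn 0] by (simp add: moser_de_bruijn_fps_def)
  then have "?M \<noteq> 0"
    by auto
  ultimately show ?thesis
    by simp
qed

section \<open>The inverse series and its support\<close>

definition tmF_inverse :: "bit fps" where
  "tmF_inverse = Abs_fps (\<lambda>m. of_bool (1 \<le> m \<and> (m + 1) div 2 \<in> range moser_de_bruijn))"

lemma X_mult_tmF_inverse:
  "fps_X * tmF_inverse = (1 + fps_X) * (moser_de_bruijn_fps\<^sup>2 + 1)"
proof (rule fps_ext)
  fix n :: nat
  obtain d where "n = 2 * d \<or> n = Suc (2 * d)"
    by (metis evenE oddE Suc_eq_plus1)
  moreover have "0 \<in> range moser_de_bruijn"
    using rangeI[of moser_de_bruijn 0] by simp
  ultimately show "(fps_X * tmF_inverse) $ n = ((1 + fps_X) * (moser_de_bruijn_fps\<^sup>2 + 1)) $ n"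
    by (auto simp: one_plus_X_mult_nth bit_fps_square fps_dilate_nth tmF_inverse_def
        moser_de_bruijn_fps_def)
qed

lemma tmF_inverse_cubic:
  "fps_X * (1 + tmF_inverse) + (fps_X * (1 + tmF_inverse))\<^sup>2 + (fps_X * (1 + tmF_inverse)) ^ 3
    = fps_X"
proof -
  define s where "s = fps_X * (1 + tmF_inverse)"
  define w where "w = (1 + fps_X) * moser_de_bruijn_fps\<^sup>2"
  have "s = 1 + w"
  proof (rule bit_fps_eq_if_diff_eq_double)
    show "s - (1 + w) = 2 * fps_X"
      using X_mult_tmF_inverse unfolding s_def w_def by algebra
  qed
  moreover have "w ^ 3 = 1 + fps_X"
    using moser_de_bruijn_fps_cube unfolding w_def by algebra
  ultimately have "s + s\<^sup>2 + s ^ 3 - fps_X = 2 * (2 + 3 * w + 2 * w\<^sup>2)"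
    by algebra
  then have "s + s\<^sup>2 + s ^ 3 = fps_X"
    by (rule bit_fps_eq_if_diff_eq_double)
  then show ?thesis
    by (simp only: s_def)
qed

lemma tmF_right_inverse_unique:
  assumes "G $ 0 = 0" and "tmF oo G = fps_X"
  shows "G = tmF_inverse"
proof -
  have "fps_X * (1 + G) = fps_X * (1 + tmF_inverse)"
    by (rule fps_cubic_injective) (simp_all only: tmF_right_inverse_cubic[OF assms]
        tmF_inverse_cubic fps_X_mult_nth refl if_True)
  then show ?thesis
    by simp
qed

lemma enumerate_eq_strict_mono:
  fixes f :: "nat \<Rightarrow> nat"
  assumes f: "strict_mono f" and S: "range f = S"
  shows "enumerate S n = f n"
proof -
  have inf: "infinite S"
    using S f by (metis finite_imageD infinite_UNIV_nat strict_mono_imp_inj_on)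
  show ?thesis
  proof (induction n)
    case 0
    show ?case
      unfolding enumerate_0 using S by (auto intro!: Least_equality strict_mono_leD[OF f])
  next
    case (Suc n)
    have "f (Suc n) \<le> f k" if "f n < f k" for k
      using that f by (simp add: strict_mono_less strict_mono_less_eq Suc_le_eq)
    then show ?case
      unfolding enumerate_Suc''[OF inf] Suc using S f
      by (auto intro!: Least_equality simp: strict_mono_Suc_iff)
  qed
qed

definition tmF_inverse_support :: "nat \<Rightarrow> nat" where
  "tmF_inverse_support n = 2 * moser_de_bruijn ((n + 1) div 2) - of_bool (odd n)"

lemma strict_mono_tmF_inverse_support: "strict_mono tmF_inverse_support"
  unfolding strict_mono_Suc_iff
proof
  fix n
  show "tmF_inverse_support n < tmF_inverse_support (Suc n)"
  proof (cases "even n")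
    case True
    then have "(n + 1) div 2 = n div 2" "(Suc n + 1) div 2 = Suc (n div 2)"
      by presburger+
    moreover have "moser_de_bruijn (n div 2) < moser_de_bruijn (Suc (n div 2))"
      using strict_mono_moser_de_bruijn by (simp add: strict_mono_Suc_iff)
    ultimately show ?thesis
      using True by (simp add: tmF_inverse_support_def)
  next
    case False
    then have "(Suc n + 1) div 2 = (n + 1) div 2" "0 < (n + 1) div 2"
      by presburger+
    then show ?thesis
      using False moser_de_bruijn_pos_iff[of "(n + 1) div 2"]
      by (simp add: tmF_inverse_support_def)
  qed
qed

lemma range_tmF_inverse_support:
  "range (\<lambda>j. tmF_inverse_support (Suc j)) = {m. 1 \<le> m \<and> tmF_inverse $ m = 1}"
proof (intro set_eqI iffI)
  fix m
  assume "m \<in> range (\<lambda>j. tmF_inverse_support (Suc j))"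
  then obtain n where m: "m = tmF_inverse_support n" and "0 < n"
    by blast
  then have "0 < moser_de_bruijn ((n + 1) div 2)"
    by (simp add: moser_de_bruijn_pos_iff)
  then have "1 \<le> m" "(m + 1) div 2 = moser_de_bruijn ((n + 1) div 2)"
    unfolding m tmF_inverse_support_def by auto
  then show "m \<in> {m. 1 \<le> m \<and> tmF_inverse $ m = 1}"
    by (auto simp: tmF_inverse_def)
next
  fix m
  assume "m \<in> {m. 1 \<le> m \<and> tmF_inverse $ m = 1}"
  then obtain k where m: "1 \<le> m" and k: "(m + 1) div 2 = moser_de_bruijn k"
    by (auto simp: tmF_inverse_def split: if_splits)
  have "0 < (m + 1) div 2"
    using m by simp
  then have "0 < k"
    using k moser_de_bruijn_pos_iff[of k] by simp
  define n where "n = 2 * k - of_bool (odd m)"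
  have "0 < n" "(n + 1) div 2 = k" "odd n \<longleftrightarrow> odd m"
    using \<open>0 < k\<close> unfolding n_def by auto
  moreover have "m = 2 * ((m + 1) div 2) - of_bool (odd m)"
    by (cases "even m") (auto elim!: evenE oddE)
  ultimately have "m = tmF_inverse_support (Suc (n - 1))"
    using k by (simp add: tmF_inverse_support_def)
  then show "m \<in> range (\<lambda>j. tmF_inverse_support (Suc j))"
    by blast
qed

lemma aseq_tmF_inverse: "aseq tmF_inverse n = tmF_inverse_support n"
proof (cases n)
  case 0
  then show ?thesis
    by (simp add: aseq_def tmF_inverse_support_def)
next
  case (Suc j)
  have "strict_mono (\<lambda>j. tmF_inverse_support (Suc j))"
    using strict_mono_tmF_inverse_support by (simp add: strict_mono_Suc_iff)
  then show ?thesis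
    using Suc enumerate_eq_strict_mono[OF _ range_tmF_inverse_support] by (simp add: aseq_def)
qed

lemma tm_tmF_inverse_support_double: "tm (tmF_inverse_support (2 * n)) = tm n"
  using tm_double[of "moser_de_bruijn n"]
  by (simp add: tmF_inverse_support_def tm_moser_de_bruijn)

lemma tm_tmF_inverse_support_Suc_double:
  "tm (tmF_inverse_support (Suc (2 * n))) = tm (Suc n)"
  using tm_double_moser_de_bruijn_minus_one[of "Suc n"]
  by (simp add: tmF_inverse_support_def)

theorem mainTheorem9:
  fixes G :: "bit fps"
  assumes "fps_nth G 0 = 0"
    and "tmF oo G = fps_X"
    and "G oo tmF = fps_X"
  shows "(\<forall>n. real (tm (aseq G n)) =
            (real (tm n) + real (tm (n + 1))) / 2
            + (-1) ^ n * (real (tm n) - real (tm (n + 1))) / 2)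
       \<and> (\<forall>n. tm (aseq G (2 * n)) = tm n \<and> tm (aseq G (2 * n + 1)) = tm (n + 1))"
proof -
  \<comment> \<open>Being a right inverse already determines \<open>G\<close>.\<close>
  have G: "G = tmF_inverse"
    using tmF_right_inverse_unique assms(1,2) by blast
  have even: "tm (aseq G (2 * n)) = tm n" and odd: "tm (aseq G (Suc (2 * n))) = tm (Suc n)" for n
    by (simp_all add: G aseq_tmF_inverse tm_tmF_inverse_support_double
        tm_tmF_inverse_support_Suc_double)
  have "real (tm (aseq G n)) = (real (tm n) + real (tm (n + 1))) / 2
      + (-1) ^ n * (real (tm n) - real (tm (n + 1))) / 2" for n
  proof (cases "even n")
    case True
    then show ?thesis
      using even[of "n div 2"] tm_double[of "n div 2"] by (auto elim!: evenE simp: field_simps)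
  next
    case False
    then show ?thesis
      using odd[of "n div 2"] tm_double[of "Suc (n div 2)"] by (auto elim!: oddE simp: field_simps)
  qed
  with even odd show ?thesis
    by simp
qed

end
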